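(* Let $A,B,A',B'$ be finite-dimensional physical systems with $|A||B|=|A'||B'|$, and let $\mathcal{U}(X)=UXU^*$ be a unitary channel from $AB$ to $A'B'$ that is Gibbs preserving, i.e. $\mathcal{U}(\gamma^{A}\otimes\gamma^{B})=\gamma^{A'}\otimes\gamma^{B'}$. Then the map defined for all states $\omega$ of $A$ by $$\mathcal{N}^{A\to A'}(\omega^A)\coloneqq \mathrm{Tr}_{B'}\left[\mathcal{U}^{AB\to A'B'}\left(\omega^A\otimes\gamma^B\right)\right]$$ is a thermal operation from $A$ to $A'$.
   Context: Every physical system $X$ is finite dimensional and has a Hamiltonian $H^X$ (a Hermitian, positive semidefinite operator); composite systems of non-interacting parts have Hamiltonian $H^{XY}=H^X\otimes I^Y+I^X\otimes H^Y$. A fixed inverse temperature $\beta>0$ is given, and the Gibbs state of $X$ is $\gamma^X=e^{-\beta H^X}/\mathrm{Tr}[e^{-\beta H^X}]$ (so $\gamma^{XY}=\gamma^X\otimes\gamma^Y$). A thermal operation from $A$ to $A'$ is a quantum channel (CPTP map) obtainable by composing the following three steps: (i) appending any system $C$ prepared in its Gibbs state $\gamma^C$; (ii) applying a unitary on a composite system that commutes with the total Hamiltonian of that composite system; (iii) tracing out (discarding) subsystems. *)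

theory Defs
  imports "Jordan_Normal_Form.Schur_Decomposition"
begin

(* All operators are complex matrices; a finite-dimensional system is described by
   its Hamiltonian, a dim x dim complex matrix. *)

definition mtrace :: "complex mat \<Rightarrow> complex" where
  "mtrace M = (\<Sum>i<dim_row M. M $$ (i,i))"

definition hermitian :: "complex mat \<Rightarrow> bool" where
  "hermitian M \<longleftrightarrow> square_mat M \<and> mat_adjoint M = M"

definition psd :: "complex mat \<Rightarrow> bool" where
  "psd M \<longleftrightarrow> hermitian M \<and>
     (\<forall>v. dim_vec v = dim_row M \<longrightarrow> 0 \<le> Re ((M *\<^sub>v v) \<bullet>c v))"

definition density :: "nat \<Rightarrow> complex mat \<Rightarrow> bool" where
  "density n \<rho> \<longleftrightarrow> \<rho> \<in> carrier_mat n n \<and> psd \<rho> \<and> mtrace \<rho> = 1"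

definition unitary :: "complex mat \<Rightarrow> bool" where
  "unitary U \<longleftrightarrow> square_mat U \<and> mat_adjoint U * U = 1\<^sub>m (dim_row U)
      \<and> U * mat_adjoint U = 1\<^sub>m (dim_row U)"

definition physical :: "complex mat \<Rightarrow> bool" where
  "physical H \<longleftrightarrow> square_mat H \<and> dim_row H > 0 \<and> psd H"

definition mexp :: "complex mat \<Rightarrow> complex mat" where
  "mexp A = mat (dim_row A) (dim_col A)
     (\<lambda>(i,j). (\<Sum>k. (A ^\<^sub>m k) $$ (i,j) / of_nat (fact k)))"

definition gibbs :: "real \<Rightarrow> complex mat \<Rightarrow> complex mat" where
  "gibbs \<beta> H = (let E = mexp ((- complex_of_real \<beta>) \<cdot>\<^sub>m H) in (1 / mtrace E) \<cdot>\<^sub>m E)"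

definition kron :: "complex mat \<Rightarrow> complex mat \<Rightarrow> complex mat" where
  "kron A B = mat (dim_row A * dim_row B) (dim_col A * dim_col B)
     (\<lambda>(i,j). A $$ (i div dim_row B, j div dim_col B) * B $$ (i mod dim_row B, j mod dim_col B))"

definition ham_sum :: "complex mat \<Rightarrow> complex mat \<Rightarrow> complex mat" where
  "ham_sum HX HY = kron HX (1\<^sub>m (dim_row HY)) + kron (1\<^sub>m (dim_row HX)) HY"

(* partial trace over the middle factor of a system of dimension d1 * d2 * d3
   (index (a*d2 + b)*d3 + c), leaving a d1*d3 dimensional operator *)
definition ptrace_mid :: "nat \<Rightarrow> nat \<Rightarrow> nat \<Rightarrow> complex mat \<Rightarrow> complex mat" where
  "ptrace_mid d1 d2 d3 M = mat (d1 * d3) (d1 * d3)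
     (\<lambda>(i,j). \<Sum>b<d2. M $$ ((i div d3 * d2 + b) * d3 + i mod d3,
                              (j div d3 * d2 + b) * d3 + j mod d3))"

definition ptrace2 :: "nat \<Rightarrow> nat \<Rightarrow> complex mat \<Rightarrow> complex mat" where
  "ptrace2 dX dY M = ptrace_mid dX dY 1 M"

(* Composite systems are lists of (non-interacting) component systems,
   each given by its Hamiltonian. *)
definition sys_dim :: "complex mat list \<Rightarrow> nat" where
  "sys_dim S = prod_list (map dim_row S)"

definition sys_ham :: "complex mat list \<Rightarrow> complex mat" where
  "sys_ham S = foldl ham_sum (0\<^sub>m 1 1) S"

(* Elementary steps of thermal operations, as channels (maps on operators) from the
   system given as first argument to the system given as second argument. *)
inductive thermal_step :: "real \<Rightarrow> complex mat list \<Rightarrow> complex mat list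
    \<Rightarrow> (complex mat \<Rightarrow> complex mat) \<Rightarrow> bool" for \<beta> where
  append_gibbs: "physical HC \<Longrightarrow>
     thermal_step \<beta> S (S @ [HC]) (\<lambda>\<rho>. kron \<rho> (gibbs \<beta> HC))"
| energy_unitary: "unitary U \<Longrightarrow> U \<in> carrier_mat (sys_dim S) (sys_dim S) \<Longrightarrow>
     U * sys_ham S = sys_ham S * U \<Longrightarrow>
     thermal_step \<beta> S S (\<lambda>\<rho>. U * \<rho> * mat_adjoint U)"
| trace_out: "k < length S \<Longrightarrow>
     thermal_step \<beta> S (take k S @ drop (Suc k) S)
       (ptrace_mid (sys_dim (take k S)) (dim_row (S ! k)) (sys_dim (drop (Suc k) S)))"

inductive thermal_op :: "real \<Rightarrow> complex mat list \<Rightarrow> complex mat list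
    \<Rightarrow> (complex mat \<Rightarrow> complex mat) \<Rightarrow> bool" for \<beta> where
  refl: "thermal_op \<beta> S S (\<lambda>\<rho>. \<rho>)"
| step: "thermal_op \<beta> S S' N \<Longrightarrow> thermal_step \<beta> S' S'' M \<Longrightarrow>
     thermal_op \<beta> S S'' (M \<circ> N)"

end

(* Gibbs states of composite systems factorize, so the Gibbs-preserving unitary U conjugates
   exp(-beta H^AB) to a positive multiple of exp(-beta H^A'B'). Diagonalizing both Hamiltonians and
   taking logarithms eigenvalue by eigenvalue gives H^A'B' = U H^AB U^* + kappa I for a real kappa.
   The unitary W = (U^* (x) U) SWAP on AB (x) A'B' maps X (x) Y to U^* Y U (x) U X U^*, so this
   energy shift makes W commute with H^AB (x) I + I (x) H^A'B'. Appending B, A', B' in their Gibbs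
   states, applying W, and discarding A and B (which W leaves in the state gamma^A (x) gamma^B)
   and finally B' therefore realizes the given map as a thermal operation. *)

theory Submission
  imports Defs "Jordan_Normal_Form.Spectral_Radius"
begin

lemma mat_adjoint_dim [simp]:
  "dim_row (mat_adjoint A) = dim_col A" "dim_col (mat_adjoint A) = dim_row (A :: complex mat)"
  unfolding mat_adjoint_def by auto

lemma mat_adjoint_index [simp]:
  "i < dim_col A \<Longrightarrow> j < dim_row A \<Longrightarrow> mat_adjoint (A :: complex mat) $$ (i, j) = cnj (A $$ (j, i))"
  unfolding mat_adjoint_def by (simp add: mat_of_rows_def conjugate_vec_def)

lemma mat_adjoint_carrier [simp]:
  "A \<in> carrier_mat n m \<Longrightarrow> mat_adjoint (A :: complex mat) \<in> carrier_mat m n"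
  by auto

lemma mat_adjoint_adjoint [simp]: "mat_adjoint (mat_adjoint (A :: complex mat)) = A"
  by (rule eq_matI) auto

lemma mat_adjoint_mult:
  "A \<in> carrier_mat n m \<Longrightarrow> B \<in> carrier_mat m p \<Longrightarrow>
    mat_adjoint (A * B) = mat_adjoint B * mat_adjoint (A :: complex mat)"
  by (rule eq_matI) (auto simp: scalar_prod_def intro!: sum.cong)

lemma mat_adjoint_one [simp]: "mat_adjoint (1\<^sub>m n :: complex mat) = 1\<^sub>m n"
  by (rule eq_matI) auto

lemma mat_adjoint_add:
  "A \<in> carrier_mat n m \<Longrightarrow> B \<in> carrier_mat n m \<Longrightarrow>
    mat_adjoint (A + B) = mat_adjoint A + mat_adjoint (B :: complex mat)"
  by (rule eq_matI) auto

lemma mult_carrier_square: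
  "A \<in> carrier_mat n n \<Longrightarrow> B \<in> carrier_mat n n \<Longrightarrow> A * B \<in> carrier_mat n n"
  by (rule mult_carrier_mat)

lemma hermitian_carrierD:
  "hermitian A \<Longrightarrow> A \<in> carrier_mat (dim_row A) (dim_row A)"
  unfolding hermitian_def by (auto intro: carrier_matI)

lemma hermitian_index_cnj:
  assumes "hermitian A" "i < dim_row A" "j < dim_row A"
  shows "A $$ (i, j) = cnj (A $$ (j, i))"
  using assms mat_adjoint_index[of i A j] unfolding hermitian_def by auto

lemma unitary_carrierD:
  assumes "unitary U" "U \<in> carrier_mat n n"
  shows "mat_adjoint U * U = 1\<^sub>m n" "U * mat_adjoint U = 1\<^sub>m n"
  using assms unfolding unitary_def by auto

lemma unitaryI:
  "U \<in> carrier_mat n n \<Longrightarrow> mat_adjoint U * U = 1\<^sub>m n \<Longrightarrow> U * mat_adjoint U = 1\<^sub>m n \<Longrightarrow> unitary U"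
  unfolding unitary_def by auto

lemma unitary_adjoint:
  "unitary U \<Longrightarrow> unitary (mat_adjoint U)"
  unfolding unitary_def by auto

lemma unitary_cancel_left:
  assumes U: "unitary U" "U \<in> carrier_mat n n" and X: "X \<in> carrier_mat n m"
  shows "mat_adjoint U * (U * X) = X" "U * (mat_adjoint U * X) = X"
proof -
  have "mat_adjoint U * (U * X) = (mat_adjoint U * U) * X"
    using U X by (intro assoc_mult_mat[symmetric]) auto
  then show "mat_adjoint U * (U * X) = X" using unitary_carrierD[OF U] X by simp
  have "U * (mat_adjoint U * X) = (U * mat_adjoint U) * X"
    using U X by (intro assoc_mult_mat[symmetric]) auto
  then show "U * (mat_adjoint U * X) = X" using unitary_carrierD[OF U] X by simp
qed

lemma unitary_mult:
  assumes U: "unitary U" "U \<in> carrier_mat n n" and V: "unitary V" "V \<in> carrier_mat n n"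
  shows "unitary (U * V)"
proof (rule unitaryI)
  show "U * V \<in> carrier_mat n n" using U V by simp
  have adj: "mat_adjoint (U * V) = mat_adjoint V * mat_adjoint U"
    using U V by (simp add: mat_adjoint_mult)
  have "mat_adjoint (U * V) * (U * V) = mat_adjoint V * (mat_adjoint U * (U * V))"
    unfolding adj using U V by (intro assoc_mult_mat) auto
  then show "mat_adjoint (U * V) * (U * V) = 1\<^sub>m n"
    using unitary_cancel_left[OF U, of V n] unitary_carrierD[OF V] V by simp
  have "U * V * mat_adjoint (U * V) = U * (V * (mat_adjoint V * mat_adjoint U))"
    unfolding adj using U V by (intro assoc_mult_mat) auto
  then show "U * V * mat_adjoint (U * V) = 1\<^sub>m n"
    using unitary_cancel_left[OF V, of "mat_adjoint U" n] unitary_carrierD[OF U] U by simp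
qed

lemma unitary_conj_fixed_imp_commute:
  assumes U: "unitary U" "U \<in> carrier_mat n n" and K: "K \<in> carrier_mat n n"
    and fixed: "U * K * mat_adjoint U = K"
  shows "U * K = K * U"
proof -
  have "K * U = U * K * mat_adjoint U * U" by (simp only: fixed)
  also have "\<dots> = U * K * (mat_adjoint U * U)"
    using U K by (intro assoc_mult_mat[of _ n n _ n _ n]) auto
  finally show ?thesis using U K unitary_carrierD[OF U] by simp
qed

lemma index_less_mult: "x < (a::nat) \<Longrightarrow> y < b \<Longrightarrow> x * b + y < a * b"
proof -
  assume "x < a" "y < b"
  then have "x * b + y < Suc x * b" by simp
  also have "\<dots> \<le> a * b" using \<open>x < a\<close> by (intro mult_right_mono) auto
  finally show ?thesis .
qed

lemma div_mod_less_mult: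
  "(i::nat) < a * b \<Longrightarrow> i div b < a" "(i::nat) < a * b \<Longrightarrow> i mod b < b"
  by (simp add: less_mult_imp_div_less) (metis mod_less_divisor mult_zero_right not_gr_zero not_less_zero)

lemma sum_lessThan_mult:
  "(\<Sum>k < (a::nat) * b. f k) = (\<Sum>x<a. \<Sum>y<b. (f (x * b + y) :: 'a::comm_monoid_add))"
proof -
  have "(\<Sum>k < a * b. f k) = (\<Sum>x<a. sum f {x * b..<x * b + b})"
    by (rule sum.nat_group[symmetric])
  also have "\<dots> = (\<Sum>x<a. \<Sum>y<b. f (x * b + y))"
  proof (rule sum.cong[OF HOL.refl])
    fix x
    have "sum f {0 + x * b..<b + x * b} = sum (\<lambda>i. f (i + x * b)) {0..<b}"
      by (rule sum.shift_bounds_nat_ivl)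
    then show "sum f {x * b..<x * b + b} = (\<Sum>y<b. f (x * b + y))"
      by (simp add: atLeast0LessThan add.commute)
  qed
  finally show ?thesis .
qed

lemma kron_dim [simp]:
  "dim_row (kron A B) = dim_row A * dim_row B" "dim_col (kron A B) = dim_col A * dim_col B"
  unfolding kron_def by auto

lemma kron_carrier [simp]:
  "A \<in> carrier_mat a a' \<Longrightarrow> B \<in> carrier_mat b b' \<Longrightarrow> kron A B \<in> carrier_mat (a * b) (a' * b')"
  by auto

lemma kron_index [simp]:
  "i < dim_row A * dim_row B \<Longrightarrow> j < dim_col A * dim_col B \<Longrightarrow>
    kron A B $$ (i, j) = A $$ (i div dim_row B, j div dim_col B) * B $$ (i mod dim_row B, j mod dim_col B)"
  unfolding kron_def by auto

lemma kron_mult: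
  assumes A: "A \<in> carrier_mat a a'" and B: "B \<in> carrier_mat b b'"
    and C: "C \<in> carrier_mat a' a''" and D: "D \<in> carrier_mat b' b''"
  shows "kron A B * kron C D = kron (A * C) (B * D)"
proof (rule eq_matI)
  fix i j assume "i < dim_row (kron (A * C) (B * D))" "j < dim_col (kron (A * C) (B * D))"
  then have i: "i < a * b" and j: "j < a'' * b''" using A B C D by auto
  have "(kron A B * kron C D) $$ (i, j) = (\<Sum>k < a' * b'. kron A B $$ (i, k) * kron C D $$ (k, j))"
    using A B C D i j by (simp add: scalar_prod_def atLeast0LessThan)
  also have "\<dots> = (\<Sum>x<a'. \<Sum>y<b'. (A $$ (i div b, x) * C $$ (x, j div b'')) *
                                      (B $$ (i mod b, y) * D $$ (y, j mod b'')))"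
  proof (unfold sum_lessThan_mult, intro sum.cong HOL.refl)
    fix x y assume "x \<in> {..<a'}" "y \<in> {..<b'}"
    then have xy: "x * b' + y < a' * b'" "(x * b' + y) div b' = x" "(x * b' + y) mod b' = y"
      by (auto simp: index_less_mult)
    then show "kron A B $$ (i, x * b' + y) * kron C D $$ (x * b' + y, j) =
      (A $$ (i div b, x) * C $$ (x, j div b'')) * (B $$ (i mod b, y) * D $$ (y, j mod b''))"
      using A B C D i j by (simp add: ac_simps)
  qed
  also have "\<dots> = (\<Sum>x<a'. A $$ (i div b, x) * C $$ (x, j div b'')) *
                  (\<Sum>y<b'. B $$ (i mod b, y) * D $$ (y, j mod b''))"
    by (simp add: sum_product)
  also have "\<dots> = kron (A * C) (B * D) $$ (i, j)"
    using A B C D i j div_mod_less_mult[OF i] div_mod_less_mult[OF j]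
    by (simp add: scalar_prod_def atLeast0LessThan)
  finally show "(kron A B * kron C D) $$ (i, j) = kron (A * C) (B * D) $$ (i, j)" .
qed (use A B C D in auto)

lemma kron_adjoint: "mat_adjoint (kron A B) = kron (mat_adjoint A) (mat_adjoint B)"
  by (rule eq_matI) (auto simp: div_mod_less_mult)

lemma kron_one: "kron (1\<^sub>m a) (1\<^sub>m b) = (1\<^sub>m (a * b) :: complex mat)"
proof (rule eq_matI)
  fix i j assume "i < dim_row (1\<^sub>m (a * b) :: complex mat)" "j < dim_col (1\<^sub>m (a * b) :: complex mat)"
  then have i: "i < a * b" and j: "j < a * b" by auto
  have "i = j \<longleftrightarrow> i div b = j div b \<and> i mod b = j mod b"
    by (metis div_mult_mod_eq)
  then show "kron (1\<^sub>m a) (1\<^sub>m b) $$ (i, j) = 1\<^sub>m (a * b) $$ (i, j)"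
    using i j div_mod_less_mult[OF i] div_mod_less_mult[OF j] by auto
qed auto

lemma kron_add_left:
  "A \<in> carrier_mat n m \<Longrightarrow> A' \<in> carrier_mat n m \<Longrightarrow> kron (A + A') B = kron A B + kron A' B"
  by (rule eq_matI) (auto simp: div_mod_less_mult algebra_simps)

lemma kron_add_right:
  "B \<in> carrier_mat n m \<Longrightarrow> B' \<in> carrier_mat n m \<Longrightarrow> kron A (B + B') = kron A B + kron A B'"
  by (rule eq_matI) (auto simp: div_mod_less_mult algebra_simps)

lemma kron_smult_left: "kron (k \<cdot>\<^sub>m A) B = k \<cdot>\<^sub>m kron A B"
  by (rule eq_matI) (auto simp: div_mod_less_mult algebra_simps)

lemma kron_smult_right: "kron A (k \<cdot>\<^sub>m B) = k \<cdot>\<^sub>m kron A B"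
  by (rule eq_matI) (auto simp: div_mod_less_mult algebra_simps)

lemma div_mod_mult_assoc:
  "(i::nat) div (b * c) = i div c div b" "i mod (b * c) div c = i div c mod b"
  "i mod (b * c) mod c = i mod c"
proof -
  show "i div (b * c) = i div c div b" by (metis div_mult2_eq mult.commute)
  have e: "i mod (c * b) = c * (i div c mod b) + i mod c" by (rule mod_mult2_eq)
  show "i mod (b * c) div c = i div c mod b"
    by (cases "c = 0") (use e in \<open>simp_all add: mult.commute\<close>)
  show "i mod (b * c) mod c = i mod c" by (metis e mult.commute mod_mult_self3 mod_mod_trivial)
qed

lemma kron_assoc: "kron (kron A B) C = kron A (kron B C)"
  by (rule eq_matI) (auto simp: div_mod_less_mult div_mod_mult_assoc mult.assoc)

lemma kron_unitary:
  assumes U: "unitary U" "U \<in> carrier_mat a a" and V: "unitary V" "V \<in> carrier_mat b b"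
  shows "unitary (kron U V)"
proof (rule unitaryI)
  show "kron U V \<in> carrier_mat (a * b) (a * b)" using U V by simp
  have "mat_adjoint (kron U V) * kron U V = kron (mat_adjoint U * U) (mat_adjoint V * V)"
    unfolding kron_adjoint using U V by (intro kron_mult) auto
  then show "mat_adjoint (kron U V) * kron U V = 1\<^sub>m (a * b)"
    by (simp add: unitary_carrierD[OF U] unitary_carrierD[OF V] kron_one)
  have "kron U V * mat_adjoint (kron U V) = kron (U * mat_adjoint U) (V * mat_adjoint V)"
    unfolding kron_adjoint using U V by (intro kron_mult) auto
  then show "kron U V * mat_adjoint (kron U V) = 1\<^sub>m (a * b)"
    by (simp add: unitary_carrierD[OF U] unitary_carrierD[OF V] kron_one)
qed

lemma mat_diag_dims [simp]: "dim_row (mat_diag n d) = n" "dim_col (mat_diag n d) = n"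
  unfolding mat_diag_def by auto

lemma mat_diag_index [simp]:
  "i < n \<Longrightarrow> j < n \<Longrightarrow> mat_diag n d $$ (i, j) = (if i = j then d i else 0)"
  unfolding mat_diag_def by auto

lemma mat_diag_commute_transfer:
  assumes R: "R \<in> carrier_mat n n" and comm: "mat_diag n a * R = R * mat_diag n b"
    and eq: "\<And>i j. i < n \<Longrightarrow> j < n \<Longrightarrow> a i = b j \<Longrightarrow> a' i = b' j"
  shows "mat_diag n a' * R = R * mat_diag n (b' :: nat \<Rightarrow> 'a::field)"
proof (rule eq_matI)
  fix i j assume "i < dim_row (R * mat_diag n b')" "j < dim_col (R * mat_diag n b')"
  then have i: "i < n" and j: "j < n" using R by auto
  have "a i * R $$ (i, j) = R $$ (i, j) * b j"
    using arg_cong[OF comm, of "\<lambda>M. M $$ (i, j)"] R i j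
    by (simp add: mat_diag_mult_left mat_diag_mult_right)
  then have "R $$ (i, j) = 0 \<or> a i = b j" by (simp add: mult.commute)
  then show "(mat_diag n a' * R) $$ (i, j) = (R * mat_diag n b') $$ (i, j)"
    using eq[OF i j] R i j by (auto simp: mat_diag_mult_left mat_diag_mult_right mult.commute)
qed (use R in auto)

lemma diagonalized_index:
  assumes V: "V \<in> carrier_mat n n" and i: "i < n" and j: "j < n"
  shows "(V * mat_diag n e * mat_adjoint V) $$ (i, j) = (\<Sum>a<n. V $$ (i, a) * e a * cnj (V $$ (j, a)))"
proof -
  have "(V * mat_diag n e * mat_adjoint V) $$ (i, j) = (\<Sum>b<n. (V * mat_diag n e) $$ (i, b) * cnj (V $$ (j, b)))"
    using V i j by (simp add: scalar_prod_def atLeast0LessThan)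
  then show ?thesis
    using V i by (simp add: mat_diag_mult_right)
qed

lemma diagonalized_smult:
  assumes V: "(V :: complex mat) \<in> carrier_mat n n"
  shows "c \<cdot>\<^sub>m (V * mat_diag n d * mat_adjoint V) = V * mat_diag n (\<lambda>i. c * d i) * mat_adjoint V"
proof (rule eq_matI)
  fix i j assume "i < dim_row (V * mat_diag n (\<lambda>i. c * d i) * mat_adjoint V)"
    "j < dim_col (V * mat_diag n (\<lambda>i. c * d i) * mat_adjoint V)"
  then have i: "i < n" and j: "j < n" using V by auto
  have "(c \<cdot>\<^sub>m (V * mat_diag n d * mat_adjoint V)) $$ (i, j) = c * (V * mat_diag n d * mat_adjoint V) $$ (i, j)"
    using V i j by simp
  then show "(c \<cdot>\<^sub>m (V * mat_diag n d * mat_adjoint V)) $$ (i, j) = (V * mat_diag n (\<lambda>i. c * d i) * mat_adjoint V) $$ (i, j)"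
    by (simp only: diagonalized_index[OF V i j] sum_distrib_left) (simp add: ac_simps)
qed (use V in auto)

lemma diagonalized_add:
  assumes V: "(V :: complex mat) \<in> carrier_mat n n"
  shows "V * mat_diag n a * mat_adjoint V + V * mat_diag n b * mat_adjoint V
    = V * mat_diag n (\<lambda>i. a i + b i) * mat_adjoint V"
proof (rule eq_matI)
  fix i j assume "i < dim_row (V * mat_diag n (\<lambda>i. a i + b i) * mat_adjoint V)"
    "j < dim_col (V * mat_diag n (\<lambda>i. a i + b i) * mat_adjoint V)"
  then have i: "i < n" and j: "j < n" using V by auto
  have "(V * mat_diag n a * mat_adjoint V + V * mat_diag n b * mat_adjoint V) $$ (i, j)
      = (V * mat_diag n a * mat_adjoint V) $$ (i, j) + (V * mat_diag n b * mat_adjoint V) $$ (i, j)"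
    using V i j by simp
  then show "(V * mat_diag n a * mat_adjoint V + V * mat_diag n b * mat_adjoint V) $$ (i, j)
      = (V * mat_diag n (\<lambda>i. a i + b i) * mat_adjoint V) $$ (i, j)"
    by (simp only: diagonalized_index[OF V i j] sum.distrib[symmetric]) (simp add: algebra_simps)
qed (use V in auto)

lemma diagonalized_mult:
  assumes V: "unitary V" "(V :: complex mat) \<in> carrier_mat n n"
  shows "(V * mat_diag n a * mat_adjoint V) * (V * mat_diag n b * mat_adjoint V)
    = V * mat_diag n (\<lambda>i. a i * b i) * mat_adjoint V"
proof -
  let ?A = "mat_diag n a" and ?B = "mat_diag n b"
  have "mat_adjoint V * (V * ?B * mat_adjoint V) = mat_adjoint V * (V * (?B * mat_adjoint V))"
    using V by (metis assoc_mult_mat mat_diag_dim mat_adjoint_carrier)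
  also have "\<dots> = ?B * mat_adjoint V"
    using V by (intro unitary_cancel_left) auto
  finally have cancel: "mat_adjoint V * (V * ?B * mat_adjoint V) = ?B * mat_adjoint V" .
  have "(V * ?A * mat_adjoint V) * (V * ?B * mat_adjoint V)
      = (V * ?A) * (mat_adjoint V * (V * ?B * mat_adjoint V))"
    using V by (intro assoc_mult_mat) auto
  also have "\<dots> = V * (?A * (?B * mat_adjoint V))"
    unfolding cancel using V by (intro assoc_mult_mat) auto
  also have "?A * (?B * mat_adjoint V) = (?A * ?B) * mat_adjoint V"
    using V by (intro assoc_mult_mat[symmetric]) auto
  also have "V * ((?A * ?B) * mat_adjoint V) = V * (?A * ?B) * mat_adjoint V"
    using V by (intro assoc_mult_mat[symmetric]) auto
  finally show ?thesis by simp
qed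

lemma diagonalized_power:
  assumes V: "unitary V" "(V :: complex mat) \<in> carrier_mat n n"
  shows "(V * mat_diag n d * mat_adjoint V) ^\<^sub>m k = V * mat_diag n (\<lambda>i. d i ^ k) * mat_adjoint V"
proof (induction k)
  case 0
  show ?case using unitary_carrierD[OF V] V by (simp add: mat_diag_one)
next
  case (Suc k)
  then show ?case using diagonalized_mult[OF V, of "\<lambda>i. d i ^ k" d] by (simp add: mult.commute)
qed

lemma mexp_diagonalized:
  assumes V: "unitary V" "(V :: complex mat) \<in> carrier_mat n n"
  shows "mexp (V * mat_diag n d * mat_adjoint V) = V * mat_diag n (\<lambda>i. exp (d i)) * mat_adjoint V"
proof (rule eq_matI)
  fix i j assume "i < dim_row (V * mat_diag n (\<lambda>i. exp (d i)) * mat_adjoint V)"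
    "j < dim_col (V * mat_diag n (\<lambda>i. exp (d i)) * mat_adjoint V)"
  then have i: "i < n" and j: "j < n" using V by auto
  have exp_sums: "(\<lambda>k. z ^ k / of_nat (fact k)) sums exp z" for z :: complex
    using exp_converges[of z] by (simp add: scaleR_conv_of_real field_simps)
  have term_sums: "(\<lambda>k. V $$ (i, a) * d a ^ k * cnj (V $$ (j, a)) / of_nat (fact k))
      sums (V $$ (i, a) * exp (d a) * cnj (V $$ (j, a)))" for a
    using sums_mult[OF exp_sums[of "d a"], of "V $$ (i, a) * cnj (V $$ (j, a))"]
    by (simp add: ac_simps)
  have power_index: "((V * mat_diag n d * mat_adjoint V) ^\<^sub>m k) $$ (i, j)
      = (\<Sum>a<n. V $$ (i, a) * d a ^ k * cnj (V $$ (j, a)))" for k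
    unfolding diagonalized_power[OF V] by (rule diagonalized_index[OF V(2) i j])
  have "mexp (V * mat_diag n d * mat_adjoint V) $$ (i, j)
      = (\<Sum>k. \<Sum>a<n. V $$ (i, a) * d a ^ k * cnj (V $$ (j, a)) / of_nat (fact k))"
    unfolding mexp_def using V i j by (simp add: power_index sum_divide_distrib)
  also have "\<dots> = (\<Sum>a<n. \<Sum>k. V $$ (i, a) * d a ^ k * cnj (V $$ (j, a)) / of_nat (fact k))"
    by (rule suminf_sum) (use term_sums sums_summable in blast)
  also have "\<dots> = (\<Sum>a<n. V $$ (i, a) * exp (d a) * cnj (V $$ (j, a)))"
    using term_sums by (intro sum.cong HOL.refl) (simp add: sums_iff)
  also have "\<dots> = (V * mat_diag n (\<lambda>i. exp (d i)) * mat_adjoint V) $$ (i, j)"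
    by (rule diagonalized_index[OF V(2) i j, symmetric])
  finally show "mexp (V * mat_diag n d * mat_adjoint V) $$ (i, j)
    = (V * mat_diag n (\<lambda>i. exp (d i)) * mat_adjoint V) $$ (i, j)" .
qed (use V in \<open>auto simp: mexp_def\<close>)

lemma mtrace_diagonalized:
  assumes V: "unitary V" "(V :: complex mat) \<in> carrier_mat n n"
  shows "mtrace (V * mat_diag n e * mat_adjoint V) = (\<Sum>a<n. e a)"
proof -
  have "mtrace (V * mat_diag n e * mat_adjoint V) = (\<Sum>i<n. \<Sum>a<n. V $$ (i, a) * e a * cnj (V $$ (i, a)))"
  proof -
    have "dim_row (V * mat_diag n e * mat_adjoint V) = n" using V by simp
    then show ?thesis
      unfolding mtrace_def by (intro sum.cong HOL.refl diagonalized_index[OF V(2)]) auto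
  qed
  also have "\<dots> = (\<Sum>a<n. e a * (mat_adjoint V * V) $$ (a, a))"
    using V by (subst sum.swap) (simp add: scalar_prod_def atLeast0LessThan sum_distrib_left ac_simps)
  also have "\<dots> = (\<Sum>a<n. e a)"
    using unitary_carrierD[OF V] by simp
  finally show ?thesis .
qed

lemma kron_diagonalized:
  assumes V: "V \<in> carrier_mat a a" and W: "W \<in> carrier_mat b b"
  shows "kron (V * mat_diag a d * mat_adjoint V) (W * mat_diag b e * mat_adjoint W)
    = kron V W * mat_diag (a * b) (\<lambda>i. d (i div b) * e (i mod b)) * mat_adjoint (kron V W)"
proof -
  have "kron (mat_diag a d) (mat_diag b e) = mat_diag (a * b) (\<lambda>i. d (i div b) * e (i mod b))"
  proof (rule eq_matI)
    fix i j assume "i < dim_row (mat_diag (a * b) (\<lambda>i. d (i div b) * e (i mod b)))"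
      "j < dim_col (mat_diag (a * b) (\<lambda>i. d (i div b) * e (i mod b)))"
    then have i: "i < a * b" and j: "j < a * b" by auto
    have "i = j \<longleftrightarrow> i div b = j div b \<and> i mod b = j mod b"
      by (metis div_mult_mod_eq)
    then show "kron (mat_diag a d) (mat_diag b e) $$ (i, j) = mat_diag (a * b) (\<lambda>i. d (i div b) * e (i mod b)) $$ (i, j)"
      using i j div_mod_less_mult[OF i] div_mod_less_mult[OF j] by auto
  qed auto
  moreover have "kron (V * mat_diag a d * mat_adjoint V) (W * mat_diag b e * mat_adjoint W)
      = kron (V * mat_diag a d) (W * mat_diag b e) * kron (mat_adjoint V) (mat_adjoint W)"
    using V W by (intro kron_mult[symmetric]) auto
  moreover have "kron (V * mat_diag a d) (W * mat_diag b e) = kron V W * kron (mat_diag a d) (mat_diag b e)"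
    using V W by (intro kron_mult[symmetric]) auto
  ultimately show ?thesis by (simp add: kron_adjoint)
qed

section \<open>The spectral theorem for Hermitian matrices\<close>

lemma hermitian_adjoint_conj:
  assumes A: "hermitian A" "A \<in> carrier_mat n n" and V: "V \<in> carrier_mat n m"
  shows "hermitian (mat_adjoint V * A * V)"
proof -
  have "mat_adjoint (mat_adjoint V * A * V) = mat_adjoint V * mat_adjoint (mat_adjoint V * A)"
    using A V by (subst mat_adjoint_mult[of _ m n _ m]) auto
  also have "\<dots> = mat_adjoint V * A * V"
    using A V by (subst mat_adjoint_mult[of _ m n _ n]) (auto simp: hermitian_def assoc_mult_mat[of _ m n _ n _ m])
  finally show ?thesis
    using A V unfolding hermitian_def by auto
qed

text \<open>The reflection \<open>I - 2 u u\<^sup>* / \<parallel>u\<parallel>\<^sup>2\<close>; for \<open>u = 0\<close> it degenerates to the identity.\<close>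

definition householder :: "nat \<Rightarrow> (nat \<Rightarrow> complex) \<Rightarrow> complex mat" where
  "householder n u = mat n n (\<lambda>(i, j). (if i = j then 1 else 0)
     - complex_of_real (2 / (\<Sum>l<n. (cmod (u l))\<^sup>2)) * u i * cnj (u j))"

lemma householder_carrier [simp]:
  "householder n u \<in> carrier_mat n n" "dim_row (householder n u) = n" "dim_col (householder n u) = n"
  unfolding householder_def by auto

lemma householder_hermitian: "hermitian (householder n u)"
  unfolding hermitian_def by (auto intro!: eq_matI simp: householder_def)

lemma householder_involution: "householder n u * householder n u = 1\<^sub>m n"
proof (rule eq_matI)
  fix i j assume "i < dim_row (1\<^sub>m n :: complex mat)" "j < dim_col (1\<^sub>m n :: complex mat)"
  then have i: "i < n" and j: "j < n" by auto
  define s where "s = (\<Sum>l<n. (cmod (u l))\<^sup>2)"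
  define c where "c = complex_of_real (2 / s)"
  have "cnj z * z = complex_of_real ((cmod z)\<^sup>2)" for z
    by (subst complex_norm_square) (rule mult.commute)
  then have norm: "(\<Sum>l<n. cnj (u l) * u l) = complex_of_real s"
    unfolding s_def of_real_sum by simp
  have c: "c * c * complex_of_real s = 2 * c"
    by (cases "s = 0") (auto simp: c_def field_simps power2_eq_square)
  have delta_left: "(\<Sum>l<n. (if i = l then 1 else 0) * f l) = f i" for f :: "nat \<Rightarrow> complex"
  proof -
    have "(\<Sum>l<n. (if i = l then 1 else 0) * f l) = (\<Sum>l<n. if i = l then f i else 0)"
      by (rule sum.cong) auto
    then show ?thesis using i by simp
  qed
  have delta_right: "(\<Sum>l<n. f l * (if l = j then 1 else 0)) = f j" for f :: "nat \<Rightarrow> complex"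
    using j by (simp add: if_distrib sum.delta' cong: if_cong)
  have "(householder n u * householder n u) $$ (i, j)
      = (\<Sum>l<n. ((if i = l then 1 else 0) - c * u i * cnj (u l)) * ((if l = j then 1 else 0) - c * u l * cnj (u j)))"
    using i j by (simp add: scalar_prod_def atLeast0LessThan householder_def s_def c_def)
  also have "\<dots> = (\<Sum>l<n. (if i = l then 1 else 0) * ((if l = j then 1 else 0) - c * u l * cnj (u j)))
      - (\<Sum>l<n. (c * u i * cnj (u l)) * (if l = j then 1 else 0))
      + (\<Sum>l<n. c * c * u i * cnj (u j) * (cnj (u l) * u l))"
    by (simp add: algebra_simps sum.distrib sum_subtractf)
  also have "\<dots> = (if i = j then 1 else 0) + u i * cnj (u j) * (c * c * complex_of_real s - 2 * c)"
    by (simp only: delta_left delta_right flip: sum_distrib_left norm) (simp add: algebra_simps)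
  also have "\<dots> = 1\<^sub>m n $$ (i, j)"
    using c i j by simp
  finally show "(householder n u * householder n u) $$ (i, j) = 1\<^sub>m n $$ (i, j)" .
qed auto

lemma householder_unitary: "unitary (householder n u)"
  using householder_hermitian householder_involution
  by (intro unitaryI[of _ n]) (auto simp: hermitian_def)

lemma householder_index_below:
  "j < k \<Longrightarrow> i < n \<Longrightarrow> j < n \<Longrightarrow> (\<And>l. l < k \<Longrightarrow> u l = 0) \<Longrightarrow>
    householder n u $$ (i, j) = (if i = j then 1 else 0)"
  unfolding householder_def by simp

lemma householder_col:
  assumes k: "k < n" and i: "i < n" and unit: "(\<Sum>j<n. (cmod (v j))\<^sup>2) = 1"
    and vk: "v k = complex_of_real r"
  shows "householder n (\<lambda>j. (if j = k then 1 else 0) - v j) $$ (i, k) = v i"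
proof -
  define u where "u = (\<lambda>j. (if j = k then 1 else 0) - v j)"
  define s where "s = (\<Sum>l<n. (cmod (u l))\<^sup>2)"
  have uk: "u k = complex_of_real (1 - r)" unfolding u_def using vk by simp
  have "(cmod (u l))\<^sup>2 = (cmod (v l))\<^sup>2 + (if l = k then 1 - 2 * r else 0)" for l
  proof (cases "l = k")
    case True
    then have "(cmod (u l))\<^sup>2 = (1 - r)\<^sup>2" and "(cmod (v l))\<^sup>2 = r\<^sup>2"
      using uk vk by (simp_all only: norm_of_real power2_abs)
    then show ?thesis using True by (simp add: power2_eq_square algebra_simps)
  qed (simp add: u_def)
  then have s: "s = 2 - 2 * r"
    unfolding s_def using unit k by (simp add: sum.distrib)
  have "householder n u $$ (i, k) = (if i = k then 1 else 0) - complex_of_real (2 / s) * u i * cnj (u k)"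
    unfolding householder_def s_def using i k by simp
  also have "\<dots> = (if i = k then 1 else 0) - u i"
  proof (cases "s = 0")
    case True
    then have "(cmod (u i))\<^sup>2 = 0"
      unfolding s_def using i by (subst (asm) sum_nonneg_eq_0_iff) auto
    then show ?thesis by simp
  next
    case False
    then have "complex_of_real (2 / s) * cnj (u k) = 1"
      unfolding uk s by (simp add: field_simps)
    then show ?thesis by (metis mult.assoc mult.commute mult.right_neutral)
  qed
  finally show ?thesis unfolding u_def by simp
qed

text \<open>The spectral theorem is proved by induction on the number \<open>k\<close> of leading columns that are
  already diagonal: Hermiticity makes the trailing block invariant, and a Householder reflection
  moves one of its eigenvectors to \<open>e\<^sub>k\<close> without disturbing the first \<open>k\<close> columns.\<close>

definition diagonal_upto :: "complex mat \<Rightarrow> nat \<Rightarrow> bool" where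
  "diagonal_upto B k \<longleftrightarrow> (\<forall>i<k. \<forall>j<dim_row B. j \<noteq> i \<longrightarrow> B $$ (j, i) = 0)"

lemma diagonal_upto_hermitian_row:
  assumes B: "hermitian B" "B \<in> carrier_mat n n" and D: "diagonal_upto B k"
    and ij: "i < k" "k \<le> n" "j < n" "j \<noteq> i"
  shows "B $$ (i, j) = 0"
  using hermitian_index_cnj[OF B(1), of i j] D ij B(2) unfolding diagonal_upto_def by auto

lemma hermitian_tail_eigenvector:
  assumes B: "hermitian B" "B \<in> carrier_mat n n" and D: "diagonal_upto B k" and k: "k < n"
  shows "\<exists>\<mu> v. (\<forall>j<k. v j = 0) \<and> (\<exists>j<n. v j \<noteq> 0) \<and> (\<forall>i<n. (\<Sum>j<n. B $$ (i, j) * v j) = \<mu> * v i)"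
proof -
  define m where "m = n - k"
  define C where "C = mat m m (\<lambda>(i, j). B $$ (k + i, k + j))"
  have C: "C \<in> carrier_mat m m" unfolding C_def by simp
  from spectrum_non_empty[OF C] obtain \<mu> where "\<mu> \<in> spectrum C"
    using k m_def by auto
  then obtain w where w: "w \<in> carrier_vec m" "w \<noteq> 0\<^sub>v m" "C *\<^sub>v w = \<mu> \<cdot>\<^sub>v w"
    using C unfolding spectrum_def eigenvalue_def eigenvector_def by auto
  define v where "v = (\<lambda>j. if j < k then 0 else w $ (j - k))"
  have "(\<Sum>j<n. B $$ (i, j) * v j) = \<mu> * v i" if i: "i < n" for i
  proof -
    have "(\<Sum>j<n. B $$ (i, j) * v j) = (\<Sum>j\<in>{k..<n}. B $$ (i, j) * v j)"
      using k by (intro sum.mono_neutral_right) (auto simp: v_def)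
    also have "\<dots> = (\<Sum>t<m. B $$ (i, k + t) * w $ t)"
      unfolding m_def using k
      by (intro sum.reindex_bij_witness[of _ "\<lambda>t. k + t" "\<lambda>j. j - k"]) (auto simp: v_def)
    finally have sum_tail: "(\<Sum>j<n. B $$ (i, j) * v j) = (\<Sum>t<m. B $$ (i, k + t) * w $ t)" .
    show ?thesis
    proof (cases "i < k")
      case True
      have "B $$ (i, k + t) = 0" if "t < m" for t
        using diagonal_upto_hermitian_row[OF B D True] True k that unfolding m_def by auto
      then show ?thesis using sum_tail True by (simp add: v_def)
    next
      case False
      then have "i - k < m" "k + (i - k) = i" using i m_def by auto
      then have "(C *\<^sub>v w) $ (i - k) = (\<Sum>t<m. B $$ (i, k + t) * w $ t)"
        using C w(1) unfolding C_def by (simp add: scalar_prod_def atLeast0LessThan)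
      then show ?thesis using sum_tail False w \<open>i - k < m\<close> by (simp add: v_def)
    qed
  qed
  moreover have "\<exists>j<n. v j \<noteq> 0"
  proof -
    obtain t where "t < m" "w $ t \<noteq> 0"
      using w(1,2) by (metis eq_vecI carrier_vecD index_zero_vec)
    then show ?thesis
      by (intro exI[of _ "k + t"]) (auto simp: v_def m_def)
  qed
  moreover have "\<forall>j<k. v j = 0" by (simp add: v_def)
  ultimately show ?thesis by blast
qed

lemma normalize_with_real_entry:
  fixes v :: "nat \<Rightarrow> complex"
  assumes "j < n" "v j \<noteq> 0"
  shows "\<exists>\<alpha>. (\<Sum>l<n. (cmod (\<alpha> * v l))\<^sup>2) = 1 \<and> Im (\<alpha> * v k) = 0"
proof -
  define N where "N = (\<Sum>l<n. (cmod (v l))\<^sup>2)"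
  have "(cmod (v j))\<^sup>2 \<le> N"
    unfolding N_def using assms by (intro member_le_sum) auto
  then have N: "N > 0" using assms by (smt (verit) zero_less_power2 zero_less_norm_iff)
  define z where "z = v k"
  define \<alpha> where "\<alpha> = (if z = 0 then 1 else cnj z / complex_of_real (cmod z)) / complex_of_real (sqrt N)"
  have "(\<Sum>l<n. (cmod (\<alpha> * v l))\<^sup>2) = (\<Sum>l<n. (cmod (v l))\<^sup>2 / N)"
    unfolding \<alpha>_def using N by (intro sum.cong) (auto simp: norm_mult norm_divide power_mult_distrib power_divide)
  also have "\<dots> = 1"
    using N unfolding N_def sum_divide_distrib[symmetric] by simp
  finally have "(\<Sum>l<n. (cmod (\<alpha> * v l))\<^sup>2) = 1" .
  moreover have "\<alpha> * v k = complex_of_real (cmod z / sqrt N)"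
    unfolding \<alpha>_def z_def[symmetric]
    by (cases "z = 0") (auto simp: complex_norm_square[symmetric] power2_eq_square field_simps)
  then have "Im (\<alpha> * v k) = 0" by simp
  ultimately show ?thesis by blast
qed

lemma mult_unit_vec_eq_col:
  "A \<in> carrier_mat m n \<Longrightarrow> i < n \<Longrightarrow> A *\<^sub>v unit_vec n i = col (A :: 'a::semiring_1 mat) i"
  using col_mult2[of A m n "1\<^sub>m n" n i] by simp

lemma diagonal_upto_Suc_conj:
  assumes B: "B \<in> carrier_mat n n" and D: "diagonal_upto B k" and k: "k < n"
    and H: "H \<in> carrier_mat n n" "H * H = 1\<^sub>m n"
    and H_unit: "\<And>i. i < k \<Longrightarrow> col H i = unit_vec n i"
    and H_eigen: "B *\<^sub>v col H k = \<mu> \<cdot>\<^sub>v col H k"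
  shows "diagonal_upto (H * B * H) (Suc k)"
  unfolding diagonal_upto_def
proof (intro allI impI)
  fix i j assume i: "i < Suc k" and j: "j < dim_row (H * B * H)" and ji: "j \<noteq> i"
  have i': "i < n" and j': "j < n" using i j k H by auto
  have "col (H * B * H) i = (H * B) *\<^sub>v col H i"
    using H B i' by (intro col_mult2) auto
  also have "\<dots> = H *\<^sub>v (B *\<^sub>v col H i)"
    using H B i' by (intro assoc_mult_mat_vec) auto
  finally have col_conj: "col (H * B * H) i = H *\<^sub>v (B *\<^sub>v col H i)" .
  have "col (H * B * H) i \<in> {B $$ (i, i) \<cdot>\<^sub>v unit_vec n i, \<mu> \<cdot>\<^sub>v unit_vec n i}"
  proof (cases "i < k")
    case True
    have "B *\<^sub>v unit_vec n i = B $$ (i, i) \<cdot>\<^sub>v unit_vec n i"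
      unfolding mult_unit_vec_eq_col[OF B i']
      using D True i' B unfolding diagonal_upto_def by (intro eq_vecI) auto
    then have "col (H * B * H) i = B $$ (i, i) \<cdot>\<^sub>v unit_vec n i"
      using col_conj H_unit[OF True] mult_mat_vec[OF H(1)] mult_unit_vec_eq_col[OF H(1) i'] H_unit[OF True]
      by simp
    then show ?thesis by simp
  next
    case False
    then have "i = k" using i by simp
    have "H *\<^sub>v col H k = col (H * H) k"
      using H k by (intro col_mult2[symmetric]) auto
    then have "H *\<^sub>v col H k = unit_vec n k"
      using H k by simp
    then have "col (H * B * H) i = \<mu> \<cdot>\<^sub>v unit_vec n i"
      using col_conj H_eigen mult_mat_vec[OF H(1)] H k \<open>i = k\<close> by simp
    then show ?thesis by simp
  qed
  then have "col (H * B * H) i $ j = 0" using j' ji i' by auto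
  then show "(H * B * H) $$ (j, i) = 0" using j' i' H B by simp
qed

lemma diagonal_upto_extend:
  assumes B: "hermitian B" "B \<in> carrier_mat n n" and D: "diagonal_upto B k" and k: "k < n"
  shows "\<exists>H. unitary H \<and> H \<in> carrier_mat n n \<and> diagonal_upto (mat_adjoint H * B * H) (Suc k)"
proof -
  obtain \<mu> w where w0: "\<forall>j<k. w j = 0" and w_nonzero: "\<exists>j<n. w j \<noteq> 0"
    and w_eigen: "\<forall>i<n. (\<Sum>j<n. B $$ (i, j) * w j) = \<mu> * w i"
    using hermitian_tail_eigenvector[OF B D k] by auto
  obtain \<alpha> where unit: "(\<Sum>l<n. (cmod (\<alpha> * w l))\<^sup>2) = 1" and real: "Im (\<alpha> * w k) = 0"
    using w_nonzero normalize_with_real_entry[of _ n w k] by auto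
  define v where "v = (\<lambda>l. \<alpha> * w l)"
  define H where "H = householder n (\<lambda>l. (if l = k then 1 else 0) - v l)"
  have H: "H \<in> carrier_mat n n" "unitary H" "mat_adjoint H = H" "H * H = 1\<^sub>m n"
    unfolding H_def using householder_hermitian householder_unitary householder_involution
    by (auto simp: hermitian_def)
  have unit_v: "(\<Sum>l<n. (cmod (v l))\<^sup>2) = 1" using unit by (simp add: v_def)
  have "v k = complex_of_real (Re (v k))" using real by (simp add: v_def complex_eq_iff)
  then have col_k: "col H k = vec n v"
    using householder_col[OF k _ unit_v] H(1) k unfolding H_def by (intro eq_vecI) auto
  have "col H i = unit_vec n i" if "i < k" for i
    using householder_index_below[OF that] w0 that k H(1) unfolding H_def v_def
    by (intro eq_vecI) auto
  moreover have "B *\<^sub>v col H k = \<mu> \<cdot>\<^sub>v col H k"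
  proof (unfold col_k, rule eq_vecI)
    fix i assume "i < dim_vec (\<mu> \<cdot>\<^sub>v vec n v)"
    then have i: "i < n" by simp
    have "(B *\<^sub>v vec n v) $ i = \<alpha> * (\<Sum>j<n. B $$ (i, j) * w j)"
      using B(2) i by (simp add: v_def scalar_prod_def atLeast0LessThan sum_distrib_left ac_simps)
    then show "(B *\<^sub>v vec n v) $ i = (\<mu> \<cdot>\<^sub>v vec n v) $ i"
      using w_eigen i by (simp add: v_def)
  qed (use B(2) in simp)
  ultimately have "diagonal_upto (H * B * H) (Suc k)"
    by (rule diagonal_upto_Suc_conj[OF B(2) D k H(1,4)])
  then show ?thesis using H by auto
qed

lemma hermitian_diagonal_upto_exists:
  assumes A: "hermitian A" "A \<in> carrier_mat n n"
  shows "k \<le> n \<Longrightarrow> \<exists>V. unitary V \<and> V \<in> carrier_mat n n \<and> diagonal_upto (mat_adjoint V * A * V) k"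
proof (induction k)
  case 0
  show ?case by (intro exI[of _ "1\<^sub>m n"]) (auto simp: diagonal_upto_def unitary_def)
next
  case (Suc k)
  then obtain V where V: "unitary V" "V \<in> carrier_mat n n" and D: "diagonal_upto (mat_adjoint V * A * V) k"
    by auto
  have "hermitian (mat_adjoint V * A * V)" "mat_adjoint V * A * V \<in> carrier_mat n n"
    using hermitian_adjoint_conj[OF A V(2)] A V by auto
  moreover have "k < n" using Suc.prems by simp
  ultimately obtain H where H: "unitary H" "H \<in> carrier_mat n n"
    and D': "diagonal_upto (mat_adjoint H * (mat_adjoint V * A * V) * H) (Suc k)"
    using diagonal_upto_extend D by blast
  have "mat_adjoint (V * H) * A * (V * H) = mat_adjoint H * (mat_adjoint V * A * V) * H"
    using A V H by (simp add: mat_adjoint_mult[of V n n H n] assoc_mult_mat[of _ n n _ n _ n] mult_carrier_square)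
  then show ?case
    using D' unitary_mult[OF V H] V H by (intro exI[of _ "V * H"]) auto
qed

theorem hermitian_unitary_diagonalization:
  assumes A: "hermitian A" "A \<in> carrier_mat n n"
  shows "\<exists>V d. unitary V \<and> V \<in> carrier_mat n n \<and> A = V * mat_diag n (\<lambda>i. complex_of_real (d i)) * mat_adjoint V"
proof -
  obtain V where V: "unitary V" "V \<in> carrier_mat n n" and D: "diagonal_upto (mat_adjoint V * A * V) n"
    using hermitian_diagonal_upto_exists[OF A] by blast
  define B where "B = mat_adjoint V * A * V"
  have B: "hermitian B" "B \<in> carrier_mat n n"
    unfolding B_def using hermitian_adjoint_conj[OF A V(2)] A V by auto
  define d where "d i = Re (B $$ (i, i))" for i
  have "B = mat_diag n (\<lambda>i. complex_of_real (d i))"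
  proof (rule eq_matI)
    fix i j assume "i < dim_row (mat_diag n (\<lambda>i. complex_of_real (d i)))"
      "j < dim_col (mat_diag n (\<lambda>i. complex_of_real (d i)))"
    then have i: "i < n" and j: "j < n" by auto
    show "B $$ (i, j) = mat_diag n (\<lambda>i. complex_of_real (d i)) $$ (i, j)"
    proof (cases "i = j")
      case True
      have "B $$ (i, i) = cnj (B $$ (i, i))"
        by (rule hermitian_index_cnj) (use B i in auto)
      then have "B $$ (i, i) = complex_of_real (d i)"
        unfolding d_def by (simp add: complex_eq_iff)
      then show ?thesis using True i by simp
    next
      case False
      then show ?thesis
        using D[folded B_def] i j B(2) unfolding diagonal_upto_def by auto
    qed
  qed (use B in auto)
  moreover have "V * B * mat_adjoint V = (V * mat_adjoint V) * A * (V * mat_adjoint V)"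
    unfolding B_def using A V by (simp add: assoc_mult_mat[of _ n n _ n _ n] mult_carrier_square)
  then have "V * B * mat_adjoint V = A"
    using A unitary_carrierD[OF V] by simp
  ultimately show ?thesis using V by blast
qed

section \<open>Gibbs states\<close>

lemma physicalD:
  assumes "physical H"
  shows "hermitian H" "H \<in> carrier_mat (dim_row H) (dim_row H)" "dim_row H > 0"
  using assms hermitian_carrierD unfolding physical_def psd_def by auto

lemma gibbs_carrier: "H \<in> carrier_mat n n \<Longrightarrow> gibbs \<beta> H \<in> carrier_mat n n"
  unfolding gibbs_def mexp_def Let_def by auto

lemma gibbs_diagonalized:
  fixes d :: "nat \<Rightarrow> real"
  assumes V: "unitary V" "V \<in> carrier_mat n n" and n: "n > 0"
  shows "gibbs \<beta> (V * mat_diag n (\<lambda>i. complex_of_real (d i)) * mat_adjoint V)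
    = V * mat_diag n (\<lambda>i. complex_of_real (exp (- \<beta> * d i) / (\<Sum>j<n. exp (- \<beta> * d j)))) * mat_adjoint V"
proof -
  define Z where "Z = (\<Sum>j<n. exp (- \<beta> * d j))"
  have Z: "Z > 0" unfolding Z_def using n by (intro sum_pos) auto
  have "(\<lambda>i. exp (- complex_of_real \<beta> * complex_of_real (d i))) = (\<lambda>i. complex_of_real (exp (- \<beta> * d i)))"
    by (rule ext) (metis exp_of_real of_real_minus of_real_mult)
  then have E: "mexp ((- complex_of_real \<beta>) \<cdot>\<^sub>m (V * mat_diag n (\<lambda>i. complex_of_real (d i)) * mat_adjoint V))
      = V * mat_diag n (\<lambda>i. complex_of_real (exp (- \<beta> * d i))) * mat_adjoint V"
    using V by (simp add: diagonalized_smult mexp_diagonalized)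
  have "mtrace (V * mat_diag n (\<lambda>i. complex_of_real (exp (- \<beta> * d i))) * mat_adjoint V) = complex_of_real Z"
    unfolding mtrace_diagonalized[OF V] Z_def by simp
  then show ?thesis
    unfolding gibbs_def Let_def E Z_def[symmetric] using V Z
    by (simp add: diagonalized_smult)
qed

lemma mtrace_gibbs:
  assumes "physical H"
  shows "mtrace (gibbs \<beta> H) = 1"
proof -
  define n where "n = dim_row H"
  have n: "n > 0" unfolding n_def using physicalD(3)[OF assms] .
  obtain V d where V: "unitary V" "V \<in> carrier_mat n n"
    and H: "H = V * mat_diag n (\<lambda>i. complex_of_real (d i)) * mat_adjoint V"
    using hermitian_unitary_diagonalization physicalD[OF assms] unfolding n_def by blast
  define Z where "Z = (\<Sum>j<n. exp (- \<beta> * d j))"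
  have "Z > 0" unfolding Z_def using n by (intro sum_pos) auto
  have "mtrace (gibbs \<beta> H) = complex_of_real (\<Sum>i<n. exp (- \<beta> * d i) / Z)"
    unfolding H gibbs_diagonalized[OF V n] mtrace_diagonalized[OF V] Z_def by simp
  also have "\<dots> = 1"
    using \<open>Z > 0\<close> unfolding Z_def sum_divide_distrib[symmetric] by simp
  finally show ?thesis .
qed

lemma ham_sum_diagonalized:
  fixes dA dB :: "nat \<Rightarrow> real"
  assumes VA: "unitary VA" "VA \<in> carrier_mat a a" and VB: "unitary VB" "VB \<in> carrier_mat b b"
  shows "ham_sum (VA * mat_diag a (\<lambda>i. complex_of_real (dA i)) * mat_adjoint VA)
                 (VB * mat_diag b (\<lambda>i. complex_of_real (dB i)) * mat_adjoint VB)
    = kron VA VB * mat_diag (a * b) (\<lambda>i. complex_of_real (dA (i div b) + dB (i mod b))) * mat_adjoint (kron VA VB)"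
proof -
  let ?DA = "mat_diag a (\<lambda>i. complex_of_real (dA i))" and ?DB = "mat_diag b (\<lambda>i. complex_of_real (dB i))"
  have one: "1\<^sub>m m = V * mat_diag m (\<lambda>_. 1) * mat_adjoint V" if "unitary V" "V \<in> carrier_mat m m" for V m
    using unitary_carrierD[OF that] that by simp
  have "ham_sum (VA * ?DA * mat_adjoint VA) (VB * ?DB * mat_adjoint VB)
      = kron (VA * ?DA * mat_adjoint VA) (1\<^sub>m b) + kron (1\<^sub>m a) (VB * ?DB * mat_adjoint VB)"
    unfolding ham_sum_def using VA VB by simp
  also have "1\<^sub>m b = VB * mat_diag b (\<lambda>_. 1) * mat_adjoint VB" by (rule one[OF VB])
  also have "1\<^sub>m a = VA * mat_diag a (\<lambda>_. 1) * mat_adjoint VA" by (rule one[OF VA])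
  finally show ?thesis
    unfolding kron_diagonalized[OF VA(2) VB(2)] diagonalized_add[OF kron_carrier[OF VA(2) VB(2)]]
    by simp
qed

lemma gibbs_ham_sum:
  assumes A: "physical HA" and B: "physical HB"
  shows "gibbs \<beta> (ham_sum HA HB) = kron (gibbs \<beta> HA) (gibbs \<beta> HB)"
proof -
  define a b where "a = dim_row HA" and "b = dim_row HB"
  obtain VA dA where VA: "unitary VA" "VA \<in> carrier_mat a a"
    and HA: "HA = VA * mat_diag a (\<lambda>i. complex_of_real (dA i)) * mat_adjoint VA"
    using hermitian_unitary_diagonalization physicalD[OF A] unfolding a_def by blast
  obtain VB dB where VB: "unitary VB" "VB \<in> carrier_mat b b"
    and HB: "HB = VB * mat_diag b (\<lambda>i. complex_of_real (dB i)) * mat_adjoint VB"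
    using hermitian_unitary_diagonalization physicalD[OF B] unfolding b_def by blast
  have ab: "a > 0" "b > 0" using physicalD(3) A B unfolding a_def b_def by auto
  define ZA ZB where "ZA = (\<Sum>j<a. exp (- \<beta> * dA j))" and "ZB = (\<Sum>j<b. exp (- \<beta> * dB j))"
  have "gibbs \<beta> (ham_sum HA HB) = kron VA VB * mat_diag (a * b) (\<lambda>i. complex_of_real
      (exp (- \<beta> * (dA (i div b) + dB (i mod b))) / (\<Sum>j<a * b. exp (- \<beta> * (dA (j div b) + dB (j mod b))))))
      * mat_adjoint (kron VA VB)"
    unfolding HA HB ham_sum_diagonalized[OF VA VB] using ab
    by (intro gibbs_diagonalized kron_unitary[OF VA VB] kron_carrier[OF VA(2) VB(2)]) simp
  also have "(\<Sum>j<a * b. exp (- \<beta> * (dA (j div b) + dB (j mod b)))) = ZA * ZB"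
    unfolding ZA_def ZB_def sum_lessThan_mult sum_product
    by (intro sum.cong HOL.refl) (simp add: distrib_left flip: exp_add)
  also have "(\<lambda>i. complex_of_real (exp (- \<beta> * (dA (i div b) + dB (i mod b))) / (ZA * ZB)))
      = (\<lambda>i. complex_of_real (exp (- \<beta> * dA (i div b)) / ZA) * complex_of_real (exp (- \<beta> * dB (i mod b)) / ZB))"
  proof
    fix i
    have "exp (- \<beta> * (dA (i div b) + dB (i mod b))) = exp (- \<beta> * dA (i div b)) * exp (- \<beta> * dB (i mod b))"
      by (simp add: distrib_left flip: exp_add)
    then show "complex_of_real (exp (- \<beta> * (dA (i div b) + dB (i mod b))) / (ZA * ZB))
      = complex_of_real (exp (- \<beta> * dA (i div b)) / ZA) * complex_of_real (exp (- \<beta> * dB (i mod b)) / ZB)"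
      by (simp only: times_divide_times_eq flip: of_real_mult)
  qed
  also have "kron VA VB * mat_diag (a * b) (\<lambda>i. complex_of_real (exp (- \<beta> * dA (i div b)) / ZA)
      * complex_of_real (exp (- \<beta> * dB (i mod b)) / ZB)) * mat_adjoint (kron VA VB)
      = kron (gibbs \<beta> HA) (gibbs \<beta> HB)"
    unfolding HA HB gibbs_diagonalized[OF VA ab(1)] gibbs_diagonalized[OF VB ab(2)] ZA_def[symmetric] ZB_def[symmetric]
    by (rule kron_diagonalized[OF VA(2) VB(2), symmetric])
  finally show ?thesis .
qed

lemma hermitian_ham_sum:
  assumes "hermitian X" "hermitian Y"
  shows "hermitian (ham_sum X Y)"
proof -
  define n m where "n = dim_row X" and "m = dim_row Y"
  have X: "X \<in> carrier_mat n n" and Y: "Y \<in> carrier_mat m m"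
    using hermitian_carrierD assms unfolding n_def m_def by auto
  have "mat_adjoint (kron X (1\<^sub>m m) + kron (1\<^sub>m n) Y) = kron (mat_adjoint X) (1\<^sub>m m) + kron (1\<^sub>m n) (mat_adjoint Y)"
    using X Y by (simp add: mat_adjoint_add[of _ "n * m" "n * m"] kron_adjoint)
  then show ?thesis
    using assms X Y unfolding hermitian_def ham_sum_def n_def[symmetric] m_def[symmetric] by simp
qed

lemma diagonalized_eq_iff_commute:
  assumes W: "unitary W" "W \<in> carrier_mat n n" and Q: "unitary Q" "Q \<in> carrier_mat n n"
  shows "W * mat_diag n a * mat_adjoint W = Q * mat_diag n b * mat_adjoint Q
    \<longleftrightarrow> mat_diag n a * (mat_adjoint W * Q) = (mat_adjoint W * Q) * mat_diag n (b :: nat \<Rightarrow> complex)"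
proof -
  note simps = assoc_mult_mat[of _ n n _ n _ n] mult_carrier_square unitary_carrierD[OF W] unitary_carrierD[OF Q]
    unitary_cancel_left[OF W, of _ n] unitary_cancel_left[OF Q, of _ n]
  show ?thesis
  proof
    assume eq: "W * mat_diag n a * mat_adjoint W = Q * mat_diag n b * mat_adjoint Q"
    have "mat_adjoint W * (W * mat_diag n a * mat_adjoint W) * Q = mat_adjoint W * (Q * mat_diag n b * mat_adjoint Q) * Q"
      by (simp only: eq)
    then show "mat_diag n a * (mat_adjoint W * Q) = (mat_adjoint W * Q) * mat_diag n b"
      using W Q by (simp add: simps)
  next
    assume comm: "mat_diag n a * (mat_adjoint W * Q) = (mat_adjoint W * Q) * mat_diag n b"
    have "W * (mat_diag n a * (mat_adjoint W * Q)) * mat_adjoint Q = W * ((mat_adjoint W * Q) * mat_diag n b) * mat_adjoint Q"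
      by (simp only: comm)
    then show "W * mat_diag n a * mat_adjoint W = Q * mat_diag n b * mat_adjoint Q"
      using W Q by (simp add: simps)
  qed
qed

lemma diagonalized_gibbs_eq_imp_shift:
  fixes d g :: "nat \<Rightarrow> real"
  assumes \<beta>: "\<beta> > 0" and Z: "Z > 0" "Z' > 0"
    and W: "unitary W" "W \<in> carrier_mat n n" and Q: "unitary Q" "Q \<in> carrier_mat n n"
    and eq: "W * mat_diag n (\<lambda>i. complex_of_real (exp (- \<beta> * d i) / Z)) * mat_adjoint W
      = Q * mat_diag n (\<lambda>i. complex_of_real (exp (- \<beta> * g i) / Z')) * mat_adjoint Q"
  shows "\<exists>\<kappa>. Q * mat_diag n (\<lambda>i. complex_of_real (g i)) * mat_adjoint Q
    = W * mat_diag n (\<lambda>i. complex_of_real (d i + \<kappa>)) * mat_adjoint W"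
proof
  define \<kappa> where "\<kappa> = (ln Z - ln Z') / \<beta>"
  have shift: "complex_of_real (d i + \<kappa>) = complex_of_real (g j)"
    if "complex_of_real (exp (- \<beta> * d i) / Z) = complex_of_real (exp (- \<beta> * g j) / Z')" for i j
  proof -
    have "exp (- \<beta> * d i) / Z = exp (- \<beta> * g j) / Z'"
      using that by (simp only: of_real_eq_iff)
    then have "ln (exp (- \<beta> * d i) / Z) = ln (exp (- \<beta> * g j) / Z')"
      by simp
    then have "- \<beta> * d i - ln Z = - \<beta> * g j - ln Z'"
      using Z by (simp add: ln_div)
    then have "d i + \<kappa> = g j"
      unfolding \<kappa>_def using \<beta> by (simp add: field_simps)
    then show ?thesis by simp
  qed
  have "mat_diag n (\<lambda>i. complex_of_real (exp (- \<beta> * d i) / Z)) * (mat_adjoint W * Q)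
      = (mat_adjoint W * Q) * mat_diag n (\<lambda>i. complex_of_real (exp (- \<beta> * g i) / Z'))"
    using eq diagonalized_eq_iff_commute[OF W Q] by blast
  then have "mat_diag n (\<lambda>i. complex_of_real (d i + \<kappa>)) * (mat_adjoint W * Q)
      = (mat_adjoint W * Q) * mat_diag n (\<lambda>i. complex_of_real (g i))"
    by (rule mat_diag_commute_transfer[rotated]) (use W Q shift in auto)
  then have "W * mat_diag n (\<lambda>i. complex_of_real (d i + \<kappa>)) * mat_adjoint W
      = Q * mat_diag n (\<lambda>i. complex_of_real (g i)) * mat_adjoint Q"
    by (simp only: diagonalized_eq_iff_commute[OF W Q])
  then show "Q * mat_diag n (\<lambda>i. complex_of_real (g i)) * mat_adjoint Q
      = W * mat_diag n (\<lambda>i. complex_of_real (d i + \<kappa>)) * mat_adjoint W" ..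
qed

lemma ham_shift_of_gibbs_conj:
  assumes \<beta>: "\<beta> > 0" and n: "n > 0"
    and H: "hermitian H" "H \<in> carrier_mat n n" and H': "hermitian H'" "H' \<in> carrier_mat n n"
    and U: "unitary U" "U \<in> carrier_mat n n"
    and gibbs_conj: "U * gibbs \<beta> H * mat_adjoint U = gibbs \<beta> H'"
  shows "\<exists>\<kappa>. H' = U * H * mat_adjoint U + complex_of_real \<kappa> \<cdot>\<^sub>m 1\<^sub>m n"
proof -
  obtain P d where P: "unitary P" "P \<in> carrier_mat n n"
    and H_diag: "H = P * mat_diag n (\<lambda>i. complex_of_real (d i)) * mat_adjoint P"
    using hermitian_unitary_diagonalization[OF H] by blast
  obtain Q g where Q: "unitary Q" "Q \<in> carrier_mat n n"
    and H'_diag: "H' = Q * mat_diag n (\<lambda>i. complex_of_real (g i)) * mat_adjoint Q"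
    using hermitian_unitary_diagonalization[OF H'] by blast
  define W where "W = U * P"
  have W: "unitary W" "W \<in> carrier_mat n n"
    unfolding W_def using unitary_mult[OF U P] U P by auto
  have conj: "U * (P * X * mat_adjoint P) * mat_adjoint U = W * X * mat_adjoint W"
    if "X \<in> carrier_mat n n" for X
    unfolding W_def using that U P
    by (simp add: mat_adjoint_mult[of U n n P n] assoc_mult_mat[of _ n n _ n _ n] mult_carrier_square)
  have Z: "(\<Sum>j<n. exp (- \<beta> * d j)) > 0" "(\<Sum>j<n. exp (- \<beta> * g j)) > 0"
    using n by (auto intro: sum_pos)
  obtain \<kappa> where "H' = W * mat_diag n (\<lambda>i. complex_of_real (d i + \<kappa>)) * mat_adjoint W"
    using gibbs_conj diagonalized_gibbs_eq_imp_shift[OF \<beta> Z W Q]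
    unfolding H_diag H'_diag gibbs_diagonalized[OF P n] gibbs_diagonalized[OF Q n] conj[OF mat_diag_dim]
    by blast
  also have "\<dots> = W * mat_diag n (\<lambda>i. complex_of_real (d i)) * mat_adjoint W
      + complex_of_real \<kappa> \<cdot>\<^sub>m (W * mat_diag n (\<lambda>i. 1) * mat_adjoint W)"
    unfolding diagonalized_smult[OF W(2)] diagonalized_add[OF W(2)] by simp
  also have "\<dots> = U * H * mat_adjoint U + complex_of_real \<kappa> \<cdot>\<^sub>m 1\<^sub>m n"
    unfolding H_diag conj[OF mat_diag_dim] using W unitary_carrierD[OF W] by simp
  finally show ?thesis by blast
qed

section \<open>The swap dilation of a unitary\<close>

definition swap_index :: "nat \<Rightarrow> nat \<Rightarrow> nat" where
  "swap_index N i = (i mod N) * N + i div N"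

definition swap_mat :: "nat \<Rightarrow> complex mat" where
  "swap_mat N = mat (N * N) (N * N) (\<lambda>(i, j). if i = swap_index N j then 1 else 0)"

lemma swap_index:
  assumes i: "i < N * N"
  shows "swap_index N i < N * N" "swap_index N i div N = i mod N" "swap_index N i mod N = i div N"
    "swap_index N (swap_index N i) = i"
proof -
  have d: "i div N < N" "i mod N < N" using div_mod_less_mult[OF i] by auto
  show "swap_index N i < N * N" unfolding swap_index_def using d by (simp add: index_less_mult)
  show div: "swap_index N i div N = i mod N" and mod: "swap_index N i mod N = i div N"
    unfolding swap_index_def using d by simp_all
  show "swap_index N (swap_index N i) = i"
    unfolding swap_index_def[of N "swap_index N i"] div mod by (simp add: mult.commute)
qed

lemma swap_mat_carrier [simp]:
  "swap_mat N \<in> carrier_mat (N * N) (N * N)" "dim_row (swap_mat N) = N * N" "dim_col (swap_mat N) = N * N"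
  unfolding swap_mat_def by auto

lemma swap_mat_mult_index:
  assumes X: "X \<in> carrier_mat (N * N) m" and i: "i < N * N" and j: "j < m"
  shows "(swap_mat N * X) $$ (i, j) = X $$ (swap_index N i, j)"
proof -
  have "(swap_mat N * X) $$ (i, j) = (\<Sum>k < N * N. (if i = swap_index N k then 1 else 0) * X $$ (k, j))"
    using X i j by (simp add: scalar_prod_def atLeast0LessThan swap_mat_def)
  also have "\<dots> = (\<Sum>k < N * N. if swap_index N i = k then X $$ (swap_index N i, j) else 0)"
    by (rule sum.cong) (use swap_index(4)[OF i] swap_index(4) in auto)
  finally show ?thesis using swap_index(1)[OF i] by simp
qed

lemma mult_swap_mat_index:
  assumes X: "X \<in> carrier_mat m (N * N)" and i: "i < m" and j: "j < N * N"
  shows "(X * swap_mat N) $$ (i, j) = X $$ (i, swap_index N j)"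
proof -
  have "(X * swap_mat N) $$ (i, j) = (\<Sum>k < N * N. X $$ (i, k) * (if k = swap_index N j then 1 else 0))"
    using X i j by (simp add: scalar_prod_def atLeast0LessThan swap_mat_def)
  also have "\<dots> = (\<Sum>k < N * N. if swap_index N j = k then X $$ (i, swap_index N j) else 0)"
    by (rule sum.cong) auto
  finally show ?thesis using swap_index(1)[OF j] by simp
qed

lemma swap_mat_kron:
  assumes A: "A \<in> carrier_mat N N" and B: "B \<in> carrier_mat N N"
  shows "swap_mat N * kron A B = kron B A * swap_mat N"
proof (rule eq_matI)
  fix i j assume "i < dim_row (kron B A * swap_mat N)" "j < dim_col (kron B A * swap_mat N)"
  then have i: "i < N * N" and j: "j < N * N" using A B by auto
  have "(swap_mat N * kron A B) $$ (i, j) = A $$ (i mod N, j div N) * B $$ (i div N, j mod N)"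
    using swap_mat_mult_index[of "kron A B" N "N * N" i j] A B i j swap_index[OF i] div_mod_less_mult[OF j]
    by simp
  also have "\<dots> = (kron B A * swap_mat N) $$ (i, j)"
    using mult_swap_mat_index[of "kron B A" "N * N" N i j] A B i j swap_index[OF j] div_mod_less_mult[OF i]
    by simp
  finally show "(swap_mat N * kron A B) $$ (i, j) = (kron B A * swap_mat N) $$ (i, j)" .
qed (use A B in auto)

lemma swap_mat_adjoint: "mat_adjoint (swap_mat N) = swap_mat N"
proof (rule eq_matI)
  fix i j assume "i < dim_row (swap_mat N)" "j < dim_col (swap_mat N)"
  then have i: "i < N * N" and j: "j < N * N" by auto
  then show "mat_adjoint (swap_mat N) $$ (i, j) = swap_mat N $$ (i, j)"
    unfolding swap_mat_def using swap_index(4)[OF i] swap_index(4)[OF j] by auto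
qed auto

lemma swap_mat_involution: "swap_mat N * swap_mat N = 1\<^sub>m (N * N)"
proof (rule eq_matI)
  fix i j assume "i < dim_row (1\<^sub>m (N * N) :: complex mat)" "j < dim_col (1\<^sub>m (N * N) :: complex mat)"
  then have i: "i < N * N" and j: "j < N * N" by auto
  have "(swap_mat N * swap_mat N) $$ (i, j) = (if swap_index N i = swap_index N j then 1 else 0)"
    using swap_mat_mult_index[of "swap_mat N" N "N * N" i j] swap_index(1)[OF i] i j
    unfolding swap_mat_def by simp
  also have "\<dots> = 1\<^sub>m (N * N) $$ (i, j)"
    using swap_index(4)[OF i] swap_index(4)[OF j] i j by (metis index_one_mat(1))
  finally show "(swap_mat N * swap_mat N) $$ (i, j) = 1\<^sub>m (N * N) $$ (i, j)" .
qed auto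

lemma swap_mat_unitary: "unitary (swap_mat N)"
  using swap_mat_adjoint swap_mat_involution by (intro unitaryI[of _ "N * N"]) auto

definition swap_dilation :: "complex mat \<Rightarrow> complex mat" where
  "swap_dilation U = kron (mat_adjoint U) U * swap_mat (dim_row U)"

context
  fixes U :: "complex mat" and N :: nat
  assumes U: "unitary U" "U \<in> carrier_mat N N"
begin

lemma swap_dilation_carrier: "swap_dilation U \<in> carrier_mat (N * N) (N * N)"
  unfolding swap_dilation_def using U by (intro mult_carrier_mat[of _ _ "N * N"]) auto

lemma swap_dilation_adjoint: "mat_adjoint (swap_dilation U) = swap_mat N * kron U (mat_adjoint U)"
  unfolding swap_dilation_def using U
  by (simp add: mat_adjoint_mult[of _ "N * N" "N * N" _ "N * N"] swap_mat_adjoint kron_adjoint)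

lemma swap_dilation_unitary: "unitary (swap_dilation U)"
  unfolding swap_dilation_def using U
  by (intro unitary_mult[of _ "N * N"] kron_unitary unitary_adjoint swap_mat_unitary) auto

lemma swap_dilation_conj_kron:
  assumes X: "X \<in> carrier_mat N N" and Y: "Y \<in> carrier_mat N N"
  shows "swap_dilation U * kron X Y * mat_adjoint (swap_dilation U)
    = kron (mat_adjoint U * Y * U) (U * X * mat_adjoint U)"
proof -
  let ?S = "swap_mat N" and ?K = "kron (mat_adjoint U) U"
  have S: "?S \<in> carrier_mat (N * N) (N * N)" by simp
  have K: "?K \<in> carrier_mat (N * N) (N * N)" "kron U (mat_adjoint U) \<in> carrier_mat (N * N) (N * N)"
    using U by auto
  have XY: "kron X Y \<in> carrier_mat (N * N) (N * N)" "kron Y X \<in> carrier_mat (N * N) (N * N)"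
    using X Y by auto
  have "?S * kron X Y * ?S = kron Y X * (?S * ?S)"
    using S XY by (simp add: swap_mat_kron[OF X Y] assoc_mult_mat[of _ "N * N" "N * N" _ "N * N" _ "N * N"])
  then have swapped: "?S * kron X Y * ?S = kron Y X"
    using right_mult_one_mat[OF XY(2)] by (simp add: swap_mat_involution)
  have "swap_dilation U * kron X Y * mat_adjoint (swap_dilation U)
      = ?K * (?S * kron X Y * ?S) * kron U (mat_adjoint U)"
    unfolding swap_dilation_adjoint unfolding swap_dilation_def using S K XY U
    by (simp add: assoc_mult_mat[of _ "N * N" "N * N" _ "N * N" _ "N * N"] mult_carrier_square)
  also have "\<dots> = kron (mat_adjoint U * Y * U) (U * X * mat_adjoint U)"
    unfolding swapped using U X Y by (simp add: kron_mult[of _ N N _ N N _ N _ N] mult_carrier_square)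
  finally show ?thesis .
qed

lemma swap_dilation_commute_ham_sum:
  assumes H1: "H1 \<in> carrier_mat N N" and H2: "H2 \<in> carrier_mat N N"
    and shift: "H2 = U * H1 * mat_adjoint U + \<kappa> \<cdot>\<^sub>m 1\<^sub>m N"
  shows "swap_dilation U * ham_sum H1 H2 = ham_sum H1 H2 * swap_dilation U"
proof (rule unitary_conj_fixed_imp_commute[OF swap_dilation_unitary swap_dilation_carrier])
  let ?W = "swap_dilation U" and ?I = "1\<^sub>m N :: complex mat" and ?H = "U * H1 * mat_adjoint U"
  have UH: "?H \<in> carrier_mat N N" using U H1 by (simp add: mult_carrier_square)
  have unshift: "mat_adjoint U * H2 * U = H1 + \<kappa> \<cdot>\<^sub>m ?I"
  proof -
    have Ua: "mat_adjoint U \<in> carrier_mat N N" using U by simp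
    have "mat_adjoint U * H2 = mat_adjoint U * ?H + \<kappa> \<cdot>\<^sub>m (mat_adjoint U * ?I)"
      unfolding shift using Ua UH by (simp add: mult_add_distrib_mat[of _ N N _ N] mult_smult_distrib[of _ N N _ N])
    also have "mat_adjoint U * ?H = H1 * mat_adjoint U"
      using U H1 unitary_cancel_left[OF U, of "H1 * mat_adjoint U" N]
      by (simp add: assoc_mult_mat[of _ N N _ N _ N] mult_carrier_square)
    finally have "mat_adjoint U * H2 * U = (H1 * mat_adjoint U + \<kappa> \<cdot>\<^sub>m mat_adjoint U) * U"
      using right_mult_one_mat[OF Ua] by simp
    also have "\<dots> = H1 * (mat_adjoint U * U) + \<kappa> \<cdot>\<^sub>m (mat_adjoint U * U)"
      using U H1 Ua by (simp add: add_mult_distrib_mat[of _ N N _ _ N] mult_smult_assoc_mat[of _ N N _ N]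
          assoc_mult_mat[of _ N N _ N _ N] mult_carrier_square)
    finally show ?thesis using H1 unitary_carrierD[OF U] by simp
  qed
  have "?W * ham_sum H1 H2 * mat_adjoint ?W
      = ?W * kron H1 ?I * mat_adjoint ?W + ?W * kron ?I H2 * mat_adjoint ?W"
    unfolding ham_sum_def using H1 H2 swap_dilation_carrier
    by (simp add: mult_add_distrib_mat[of _ "N * N" "N * N" _ "N * N"] add_mult_distrib_mat[of _ "N * N" "N * N" _ _ "N * N"]
        mult_carrier_square)
  also have "\<dots> = kron ?I ?H + kron (H1 + \<kappa> \<cdot>\<^sub>m ?I) ?I"
    using H1 H2 U unitary_carrierD[OF U] by (simp add: swap_dilation_conj_kron unshift)
  also have "\<dots> = ham_sum H1 H2"
    unfolding ham_sum_def shift using H1 H2 UH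
    by (intro eq_matI) (auto simp: kron_add_left[of _ N N] kron_add_right[of _ N N] kron_smult_left kron_smult_right)
  finally show "?W * ham_sum H1 H2 * mat_adjoint ?W = ham_sum H1 H2" .
  show "ham_sum H1 H2 \<in> carrier_mat (N * N) (N * N)"
    unfolding ham_sum_def using H1 H2 by auto
qed

end

section \<open>Thermal operations\<close>

lemma ptrace_mid_kron_trace_one:
  assumes P: "P \<in> carrier_mat d2 d2" and Q: "Q \<in> carrier_mat d3 d3" and trace: "mtrace P = 1"
  shows "ptrace_mid 1 d2 d3 (kron P Q) = Q"
proof (rule eq_matI)
  fix i j assume "i < dim_row Q" "j < dim_col Q"
  then have i: "i < d3" and j: "j < d3" using Q by auto
  have "ptrace_mid 1 d2 d3 (kron P Q) $$ (i, j) = (\<Sum>b<d2. kron P Q $$ (b * d3 + i, b * d3 + j))"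
    unfolding ptrace_mid_def using i j by simp
  also have "\<dots> = (\<Sum>b<d2. P $$ (b, b) * Q $$ (i, j))"
    using P Q i j by (intro sum.cong HOL.refl) (simp add: index_less_mult)
  also have "\<dots> = mtrace P * Q $$ (i, j)"
    using P unfolding mtrace_def by (simp add: sum_distrib_right)
  finally show "ptrace_mid 1 d2 d3 (kron P Q) $$ (i, j) = Q $$ (i, j)" using trace by simp
qed (use Q in \<open>auto simp: ptrace_mid_def\<close>)

lemma ham_sum_carrier:
  "X \<in> carrier_mat a a \<Longrightarrow> Y \<in> carrier_mat b b \<Longrightarrow> ham_sum X Y \<in> carrier_mat (a * b) (a * b)"
  unfolding ham_sum_def by auto

lemma ham_sum_zero_left: "H \<in> carrier_mat n n \<Longrightarrow> ham_sum (0\<^sub>m 1 1) H = H"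
  unfolding ham_sum_def by (rule eq_matI) auto

lemma ham_sum_assoc:
  assumes X: "X \<in> carrier_mat a a" and Y: "Y \<in> carrier_mat b b" and Z: "Z \<in> carrier_mat c c"
  shows "ham_sum (ham_sum X Y) Z = ham_sum X (ham_sum Y Z)"
proof -
  have "ham_sum (ham_sum X Y) Z = kron (kron X (1\<^sub>m b) + kron (1\<^sub>m a) Y) (1\<^sub>m c) + kron (1\<^sub>m (a * b)) Z"
    using X Y Z unfolding ham_sum_def by auto
  also have "\<dots> = kron X (1\<^sub>m (b * c)) + kron (1\<^sub>m a) (kron Y (1\<^sub>m c)) + kron (1\<^sub>m a) (kron (1\<^sub>m b) Z)"
    using X Y Z by (simp add: kron_add_left[of _ "a * b" "a * b"] kron_assoc kron_one[symmetric])
  also have "\<dots> = ham_sum X (ham_sum Y Z)"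
    using X Y Z unfolding ham_sum_def
    by (simp add: kron_add_right[of _ "b * c" "b * c"] assoc_add_mat[of _ "a * (b * c)" "a * (b * c)"])
  finally show ?thesis .
qed

lemma sys_ham_four:
  assumes "A \<in> carrier_mat a a" "B \<in> carrier_mat b b" "C \<in> carrier_mat c c" "D \<in> carrier_mat d d"
  shows "sys_ham [A, B, C, D] = ham_sum (ham_sum A B) (ham_sum C D)"
proof -
  have "sys_ham [A, B, C, D] = ham_sum (ham_sum (ham_sum A B) C) D"
    unfolding sys_ham_def by (simp only: foldl.simps ham_sum_zero_left[OF assms(1)])
  also have "\<dots> = ham_sum (ham_sum A B) (ham_sum C D)"
    by (rule ham_sum_assoc[OF ham_sum_carrier[OF assms(1,2)] assms(3,4)])
  finally show ?thesis .
qed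

lemma unitary_conj_inverse:
  assumes U: "unitary U" "U \<in> carrier_mat n n" and X: "X \<in> carrier_mat n n"
    and conj: "U * X * mat_adjoint U = Y"
  shows "mat_adjoint U * Y * U = X"
proof -
  have "mat_adjoint U * Y * U = mat_adjoint U * (U * (X * (mat_adjoint U * U)))"
    unfolding conj[symmetric] using U X by (simp add: assoc_mult_mat[of _ n n _ n _ n] mult_carrier_square)
  then show ?thesis
    using U X unitary_carrierD[OF U] unitary_cancel_left[OF U X] by simp
qed

lemma thermal_op_dilation:
  assumes phys: "physical HA" "physical HB" "physical HA'" "physical HB'"
    and N: "dim_row HA * dim_row HB = N" "dim_row HA' * dim_row HB' = N"
    and W: "unitary W" "W \<in> carrier_mat (N * N) (N * N)"
    and energy: "W * ham_sum (ham_sum HA HB) (ham_sum HA' HB') = ham_sum (ham_sum HA HB) (ham_sum HA' HB') * W"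
  shows "thermal_op \<beta> [HA] [HA'] (\<lambda>\<omega>. ptrace_mid (dim_row HA') (dim_row HB') 1
    (ptrace_mid 1 (dim_row HB) N (ptrace_mid 1 (dim_row HA) (dim_row HB * N)
      (W * kron (kron (kron \<omega> (gibbs \<beta> HB)) (gibbs \<beta> HA')) (gibbs \<beta> HB') * mat_adjoint W))))"
proof -
  let ?S = "[HA, HB, HA', HB']"
  have dims: "sys_dim ?S = N * N" "sys_dim [HB, HA', HB'] = dim_row HB * N"
    unfolding sys_dim_def using N by (simp_all add: mult.assoc)
  have append_B: "thermal_step \<beta> [HA] [HA, HB] (\<lambda>\<rho>. kron \<rho> (gibbs \<beta> HB))"
    using thermal_step.append_gibbs[OF phys(2), of \<beta> "[HA]"] by simp
  have append_A': "thermal_step \<beta> [HA, HB] [HA, HB, HA'] (\<lambda>\<rho>. kron \<rho> (gibbs \<beta> HA'))"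
    using thermal_step.append_gibbs[OF phys(3), of \<beta> "[HA, HB]"] by simp
  have append_B': "thermal_step \<beta> [HA, HB, HA'] ?S (\<lambda>\<rho>. kron \<rho> (gibbs \<beta> HB'))"
    using thermal_step.append_gibbs[OF phys(4), of \<beta> "[HA, HB, HA']"] by simp
  have "sys_ham ?S = ham_sum (ham_sum HA HB) (ham_sum HA' HB')"
    using physicalD(2) phys by (intro sys_ham_four)
  then have evolve: "thermal_step \<beta> ?S ?S (\<lambda>\<rho>. W * \<rho> * mat_adjoint W)"
    using W energy by (intro thermal_step.energy_unitary) (simp_all add: dims)
  have discard_A: "thermal_step \<beta> ?S [HB, HA', HB'] (ptrace_mid 1 (dim_row HA) (dim_row HB * N))"
    using thermal_step.trace_out[of 0 ?S \<beta>] N(2) by (simp add: sys_dim_def)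
  have discard_B: "thermal_step \<beta> [HB, HA', HB'] [HA', HB'] (ptrace_mid 1 (dim_row HB) N)"
    using thermal_step.trace_out[of 0 "[HB, HA', HB']" \<beta>] N by (simp add: sys_dim_def)
  have discard_B': "thermal_step \<beta> [HA', HB'] [HA'] (ptrace_mid (dim_row HA') (dim_row HB') 1)"
    using thermal_step.trace_out[of 1 "[HA', HB']" \<beta>] by (simp add: sys_dim_def)
  have "thermal_op \<beta> [HA] [HA'] (ptrace_mid (dim_row HA') (dim_row HB') 1
      \<circ> (ptrace_mid 1 (dim_row HB) N \<circ> (ptrace_mid 1 (dim_row HA) (dim_row HB * N)
      \<circ> ((\<lambda>\<rho>. W * \<rho> * mat_adjoint W) \<circ> ((\<lambda>\<rho>. kron \<rho> (gibbs \<beta> HB')) \<circ> ((\<lambda>\<rho>. kron \<rho> (gibbs \<beta> HA'))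
      \<circ> ((\<lambda>\<rho>. kron \<rho> (gibbs \<beta> HB)) \<circ> (\<lambda>\<rho>. \<rho>))))))))"
    by (rule thermal_op.step[OF thermal_op.step[OF thermal_op.step[OF thermal_op.step[OF thermal_op.step[OF
          thermal_op.step[OF thermal_op.step[OF thermal_op.refl append_B] append_A'] append_B'] evolve]
          discard_A] discard_B] discard_B'])
  then show ?thesis by (simp add: comp_def)
qed

lemma swap_dilation_conserves_energy:
  assumes \<beta>: "\<beta> > 0" and phys: "physical HA" "physical HB" "physical HA'" "physical HB'"
    and N: "dim_row HA * dim_row HB = N" "dim_row HA' * dim_row HB' = N"
    and U: "unitary U" "U \<in> carrier_mat N N"
    and gibbs_preserving: "U * kron (gibbs \<beta> HA) (gibbs \<beta> HB) * mat_adjoint U = kron (gibbs \<beta> HA') (gibbs \<beta> HB')"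
  shows "swap_dilation U * ham_sum (ham_sum HA HB) (ham_sum HA' HB')
    = ham_sum (ham_sum HA HB) (ham_sum HA' HB') * swap_dilation U"
proof -
  define H1 H2 where "H1 = ham_sum HA HB" and "H2 = ham_sum HA' HB'"
  have H1: "hermitian H1" "H1 \<in> carrier_mat N N"
    unfolding H1_def N(1)[symmetric] by (intro hermitian_ham_sum ham_sum_carrier physicalD phys)+
  have H2: "hermitian H2" "H2 \<in> carrier_mat N N"
    unfolding H2_def N(2)[symmetric] by (intro hermitian_ham_sum ham_sum_carrier physicalD phys)+
  have "U * gibbs \<beta> H1 * mat_adjoint U = gibbs \<beta> H2"
    using gibbs_preserving unfolding H1_def H2_def by (simp add: gibbs_ham_sum phys)
  moreover have "N > 0"
    unfolding N(1)[symmetric] using physicalD(3) phys by simp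
  ultimately obtain \<kappa> where "H2 = U * H1 * mat_adjoint U + complex_of_real \<kappa> \<cdot>\<^sub>m 1\<^sub>m N"
    using ham_shift_of_gibbs_conj[OF \<beta> _ H1 H2 U] by blast
  then show ?thesis
    using swap_dilation_commute_ham_sum[OF U H1(2) H2(2)] unfolding H1_def H2_def by blast
qed

lemma swap_dilation_discard_output:
  assumes phys: "physical HA" "physical HB" "physical HA'" "physical HB'"
    and N: "dim_row HA * dim_row HB = N" "dim_row HA' * dim_row HB' = N"
    and U: "unitary U" "U \<in> carrier_mat N N"
    and gibbs_preserving: "U * kron (gibbs \<beta> HA) (gibbs \<beta> HB) * mat_adjoint U = kron (gibbs \<beta> HA') (gibbs \<beta> HB')"
    and \<omega>: "\<omega> \<in> carrier_mat (dim_row HA) (dim_row HA)"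
  shows "ptrace_mid (dim_row HA') (dim_row HB') 1 (ptrace_mid 1 (dim_row HB) N (ptrace_mid 1 (dim_row HA) (dim_row HB * N)
      (swap_dilation U * kron (kron (kron \<omega> (gibbs \<beta> HB)) (gibbs \<beta> HA')) (gibbs \<beta> HB') * mat_adjoint (swap_dilation U))))
    = ptrace2 (dim_row HA') (dim_row HB') (U * kron \<omega> (gibbs \<beta> HB) * mat_adjoint U)"
proof -
  note gibbs = gibbs_carrier[OF physicalD(2)[OF phys(1)]] gibbs_carrier[OF physicalD(2)[OF phys(2)]]
    gibbs_carrier[OF physicalD(2)[OF phys(3)]] gibbs_carrier[OF physicalD(2)[OF phys(4)]]
  define \<sigma> where "\<sigma> = U * kron \<omega> (gibbs \<beta> HB) * mat_adjoint U"
  have \<sigma>: "\<sigma> \<in> carrier_mat N N"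
    unfolding \<sigma>_def using U \<omega> gibbs(2) N(1) by (metis kron_carrier mult_carrier_square mat_adjoint_carrier)
  have "mat_adjoint U * kron (gibbs \<beta> HA') (gibbs \<beta> HB') * U = kron (gibbs \<beta> HA) (gibbs \<beta> HB)"
    using unitary_conj_inverse[OF U _ gibbs_preserving] gibbs N by (metis kron_carrier)
  moreover have "kron \<omega> (gibbs \<beta> HB) \<in> carrier_mat N N" "kron (gibbs \<beta> HA') (gibbs \<beta> HB') \<in> carrier_mat N N"
    using \<omega> gibbs N by (metis kron_carrier)+
  ultimately have "swap_dilation U * kron (kron \<omega> (gibbs \<beta> HB)) (kron (gibbs \<beta> HA') (gibbs \<beta> HB'))
      * mat_adjoint (swap_dilation U) = kron (kron (gibbs \<beta> HA) (gibbs \<beta> HB)) \<sigma>"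
    unfolding \<sigma>_def by (simp add: swap_dilation_conj_kron[OF U])
  then have conj: "swap_dilation U * kron (kron (kron \<omega> (gibbs \<beta> HB)) (gibbs \<beta> HA')) (gibbs \<beta> HB')
      * mat_adjoint (swap_dilation U) = kron (gibbs \<beta> HA) (kron (gibbs \<beta> HB) \<sigma>)"
    by (simp only: kron_assoc)
  have B\<sigma>: "kron (gibbs \<beta> HB) \<sigma> \<in> carrier_mat (dim_row HB * N) (dim_row HB * N)"
    using gibbs(2) \<sigma> by (rule kron_carrier)
  show ?thesis
    unfolding ptrace2_def \<sigma>_def[symmetric] conj
      ptrace_mid_kron_trace_one[OF gibbs(1) B\<sigma> mtrace_gibbs[OF phys(1)]]
      ptrace_mid_kron_trace_one[OF gibbs(2) \<sigma> mtrace_gibbs[OF phys(2)]] by (rule HOL.refl)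
qed

theorem lemma1:
  fixes \<beta> :: real and HA HB HA' HB' U :: "complex mat"
  assumes "\<beta> > 0"
    and "physical HA" and "physical HB" and "physical HA'" and "physical HB'"
    and "dim_row HA * dim_row HB = dim_row HA' * dim_row HB'"
    and "unitary U"
    and "U \<in> carrier_mat (dim_row HA' * dim_row HB') (dim_row HA * dim_row HB)"
    and "U * kron (gibbs \<beta> HA) (gibbs \<beta> HB) * mat_adjoint U
           = kron (gibbs \<beta> HA') (gibbs \<beta> HB')"
  shows "\<exists>T. thermal_op \<beta> [HA] [HA'] T \<and>
    (\<forall>\<omega>. density (dim_row HA) \<omega> \<longrightarrow>
       T \<omega> = ptrace2 (dim_row HA') (dim_row HB')
                 (U * kron \<omega> (gibbs \<beta> HB) * mat_adjoint U))"
proof -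
  note phys = assms(2-5)
  define N where "N = dim_row HA' * dim_row HB'"
  have dims: "dim_row HA * dim_row HB = N" "dim_row HA' * dim_row HB' = N"
    using assms(6) unfolding N_def by auto
  have U: "unitary U" "U \<in> carrier_mat N N" using assms(7,8) dims by auto
  have "thermal_op \<beta> [HA] [HA'] (\<lambda>\<omega>. ptrace_mid (dim_row HA') (dim_row HB') 1
      (ptrace_mid 1 (dim_row HB) N (ptrace_mid 1 (dim_row HA) (dim_row HB * N)
        (swap_dilation U * kron (kron (kron \<omega> (gibbs \<beta> HB)) (gibbs \<beta> HA')) (gibbs \<beta> HB')
          * mat_adjoint (swap_dilation U)))))"
    by (intro thermal_op_dilation phys dims swap_dilation_unitary[OF U] swap_dilation_carrier[OF U]
        swap_dilation_conserves_energy[OF assms(1) phys dims U assms(9)])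
  then show ?thesis
    using swap_dilation_discard_output[OF phys dims U assms(9)] unfolding density_def by auto
qed

end
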